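(* Let $T>0$, $\mu,\nu\in\mathcal P(\mathcal X)$ and let $(c,v)\in\vec{\mathrm{CE}}_T(\mu,\nu)$ with $\int_0^T\vec{\mathcal A}(c(t),v(t))dt<\infty$. Then there exists a measurable $\psi:[0,T]\to\mathbb R^{\mathcal X}$ such that $(c,\psi)\in\mathrm{CE}_T(\mu,\nu)$ and $$\int_0^T\mathcal A(c(t),\psi(t))dt\le\int_0^T\vec{\mathcal A}(c(t),v(t))dt.$$
   Context: $\mathcal X=\{1,\dots,d\}$ finite, $\mathcal P(\mathcal X)\subset\mathbb R^{\mathcal X}$ probability measures on $\mathcal X$. $\{Q(\mu)\}_{\mu\in\mathcal P(\mathcal X)}$ is a family of rate matrices ($Q_{xy}(\mu)\ge0$ for $x\ne y$), each irreducible and reversible w.r.t. a Gibbs measure $\pi(\mu)$, with $\mu\mapsto Q_{xy}(\mu)$ Lipschitz. $\Lambda(s,t)=\int_0^1s^\alpha t^{1-\alpha}d\alpha$, $w_{xy}(\mu)=\Lambda(\mu_xQ_{xy}(\mu),\mu_yQ_{yx}(\mu))$. $\nabla_{xy}\psi=\psi_y-\psi_x$, $(\delta v)_x=\frac12\sum_y(v_{xy}-v_{yx})$. $(c,v)\in\vec{\mathrm{CE}}_T(\mu,\nu)$: $c:[0,T]\to\mathcal P(\mathcal X)$ continuous, $c(0)=\mu$, $c(T)=\nu$, $v:[0,T]\to\mathbb R^{\mathcal X\times\mathcal X}$ measurable and integrable, $\int_0^T[\dot\varphi c_x-\varphi(\delta v)_x]dt=0$ for all $\varphi\in C^1_c((0,T))$,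 $x\in\mathcal X$. $(c,\psi)\in\mathrm{CE}_T(\mu,\nu)$ if $(c,v)\in\vec{\mathrm{CE}}_T(\mu,\nu)$ with $v_{xy}(t)=w_{xy}(c(t))\nabla_{xy}\psi(t)$. $\alpha(v,w)=v^2/w$ if $w>0$, $0$ if $v=w=0$, $+\infty$ otherwise; $\vec{\mathcal A}(\mu,v)=\frac12\sum_{x,y}\alpha(v_{xy},w_{xy}(\mu))$; $\mathcal A(\mu,\psi)=\frac12\sum_{x,y}(\psi_y-\psi_x)^2w_{xy}(\mu)$. *)

theory Defs
  imports "HOL-Analysis.Analysis"
begin

text \<open>The finite state space X = {1..d} is modelled by a type variable of class finite.
  Measures on X and functions on X are functions 'x => real.\<close>

definition prob_meas :: "('x::finite \<Rightarrow> real) \<Rightarrow> bool" where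
  "prob_meas \<mu> \<longleftrightarrow> (\<forall>x. 0 \<le> \<mu> x) \<and> (\<Sum>x\<in>UNIV. \<mu> x) = 1"

definition logmean :: "real \<Rightarrow> real \<Rightarrow> real" where
  "logmean s t = integral {0..1} (\<lambda>a. s powr a * t powr (1 - a))"

text \<open>Edge weights w_xy(mu); only off-diagonal entries are meaningful (diagonal set to 0).\<close>
definition wgt :: "(('x::finite \<Rightarrow> real) \<Rightarrow> 'x \<Rightarrow> 'x \<Rightarrow> real) \<Rightarrow> ('x \<Rightarrow> real) \<Rightarrow> 'x \<Rightarrow> 'x \<Rightarrow> real" where
  "wgt Q \<mu> x y = (if x = y then 0 else logmean (\<mu> x * Q \<mu> x y) (\<mu> y * Q \<mu> y x))"

definition grad :: "('x \<Rightarrow> real) \<Rightarrow> 'x \<Rightarrow> 'x \<Rightarrow> real" where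
  "grad \<psi> x y = \<psi> y - \<psi> x"

definition dvg :: "('x::finite \<Rightarrow> 'x \<Rightarrow> real) \<Rightarrow> 'x \<Rightarrow> real" where
  "dvg v x = (1/2) * (\<Sum>y\<in>UNIV. v x y - v y x)"

definition alpha :: "real \<Rightarrow> real \<Rightarrow> ennreal" where
  "alpha v w = (if w > 0 then ennreal (v\<^sup>2 / w) else if v = 0 \<and> w = 0 then 0 else \<infinity>)"

definition vec_action :: "(('x::finite \<Rightarrow> real) \<Rightarrow> 'x \<Rightarrow> 'x \<Rightarrow> real) \<Rightarrow> ('x \<Rightarrow> real) \<Rightarrow> ('x \<Rightarrow> 'x \<Rightarrow> real) \<Rightarrow> ennreal" where
  "vec_action Q \<mu> v = ennreal (1/2) * (\<Sum>x\<in>UNIV. \<Sum>y\<in>UNIV. alpha (v x y) (wgt Q \<mu> x y))"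

definition action :: "(('x::finite \<Rightarrow> real) \<Rightarrow> 'x \<Rightarrow> 'x \<Rightarrow> real) \<Rightarrow> ('x \<Rightarrow> real) \<Rightarrow> ('x \<Rightarrow> real) \<Rightarrow> real" where
  "action Q \<mu> \<psi> = (1/2) * (\<Sum>x\<in>UNIV. \<Sum>y\<in>UNIV. (\<psi> y - \<psi> x)\<^sup>2 * wgt Q \<mu> x y)"

definition C1c :: "real \<Rightarrow> (real \<Rightarrow> real) \<Rightarrow> (real \<Rightarrow> real) \<Rightarrow> bool" where
  "C1c T \<phi> \<phi>' \<longleftrightarrow> (\<forall>t. (\<phi> has_real_derivative \<phi>' t) (at t)) \<and> continuous_on UNIV \<phi>' \<and>
     (\<exists>a b. 0 < a \<and> a \<le> b \<and> b < T \<and> (\<forall>t. t \<notin> {a..b} \<longrightarrow> \<phi> t = 0))"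

definition vecCE :: "real \<Rightarrow> ('x::finite \<Rightarrow> real) \<Rightarrow> ('x \<Rightarrow> real) \<Rightarrow> (real \<Rightarrow> 'x \<Rightarrow> real) \<Rightarrow> (real \<Rightarrow> 'x \<Rightarrow> 'x \<Rightarrow> real) \<Rightarrow> bool" where
  "vecCE T \<mu> \<nu> c v \<longleftrightarrow>
     (\<forall>x. continuous_on {0..T} (\<lambda>t. c t x)) \<and> (\<forall>t\<in>{0..T}. prob_meas (c t)) \<and>
     c 0 = \<mu> \<and> c T = \<nu> \<and>
     (\<forall>x y. set_integrable lborel {0..T} (\<lambda>t. v t x y)) \<and>
     (\<forall>\<phi> \<phi>' x. C1c T \<phi> \<phi>' \<longrightarrow>
        (LINT t:{0..T}|lborel. \<phi>' t * c t x - \<phi> t * dvg (v t) x) = 0)"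

definition CE :: "(('x::finite \<Rightarrow> real) \<Rightarrow> 'x \<Rightarrow> 'x \<Rightarrow> real) \<Rightarrow> real \<Rightarrow> ('x \<Rightarrow> real) \<Rightarrow> ('x \<Rightarrow> real) \<Rightarrow> (real \<Rightarrow> 'x \<Rightarrow> real) \<Rightarrow> (real \<Rightarrow> 'x \<Rightarrow> real) \<Rightarrow> bool" where
  "CE Q T \<mu> \<nu> c \<psi> \<longleftrightarrow> vecCE T \<mu> \<nu> c (\<lambda>t x y. wgt Q (c t) x y * grad (\<psi> t) x y)"

definition standing_assms :: "(('x::finite \<Rightarrow> real) \<Rightarrow> 'x \<Rightarrow> 'x \<Rightarrow> real) \<Rightarrow> (('x \<Rightarrow> real) \<Rightarrow> 'x \<Rightarrow> real) \<Rightarrow> bool" where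
  "standing_assms Q \<pi> \<longleftrightarrow>
     (\<forall>\<mu>. prob_meas \<mu> \<longrightarrow>
        (\<forall>x y. x \<noteq> y \<longrightarrow> 0 \<le> Q \<mu> x y) \<and>
        (\<forall>x y. (x, y) \<in> {(a, b). a \<noteq> b \<and> 0 < Q \<mu> a b}\<^sup>*) \<and>
        prob_meas (\<pi> \<mu>) \<and> (\<forall>x. 0 < \<pi> \<mu> x) \<and>
        (\<forall>x y. \<pi> \<mu> x * Q \<mu> x y = \<pi> \<mu> y * Q \<mu> y x)) \<and>
     (\<exists>L. \<forall>\<mu> \<mu>' x y. prob_meas \<mu> \<longrightarrow> prob_meas \<mu>' \<longrightarrow>
        \<bar>Q \<mu> x y - Q \<mu>' x y\<bar> \<le> L * (\<Sum>z\<in>UNIV. \<bar>\<mu> z - \<mu>' z\<bar>))"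

end

theory Submission
  imports Defs
begin

text \<open>For a fixed measure the statement is a finite-dimensional projection. A flux \<open>v\<close> of
  finite action vanishes on every edge of weight zero, so its divergence sums to zero over each
  connected component of the weighted graph \<open>w = wgt Q \<mu>\<close>. Hence the graph Poisson equation
  \<open>laplacian w \<psi> = - dvg v\<close> is solvable and the gradient flux \<open>w \<nabla>\<psi>\<close> has the divergence of
  \<open>v\<close>. Summation by parts gives \<open>\<Sum> v \<nabla>\<psi> = 2 action \<psi>\<close>, and \<open>v \<nabla>\<psi> \<le> v\<^sup>2/(2w) + w (\<nabla>\<psi>)\<^sup>2/2\<close>
  edgewise, so the action of \<open>\<psi>\<close> is at most that of \<open>v\<close>. Solving by Cramer's rule, with one
  normalisation per component, makes \<open>\<psi>\<close> measurable in time; the new flux is integrable because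
  the weights are bounded and the action is integrable, and as the divergence changes only on a
  null set of times, the continuity equation persists.\<close>

section \<open>Logarithmic mean\<close>

lemma integral_exp_affine:
  fixes q k :: real
  shows "integral {0..1} (\<lambda>a. exp (q + a * k)) = (if k = 0 then exp q else (exp (q + k) - exp q) / k)"
proof (cases "k = 0")
  case False
  have "((\<lambda>a. exp (q + a * k)) has_integral (exp (q + 1 * k) / k - exp (q + 0 * k) / k)) {0..1}"
  proof (rule fundamental_theorem_of_calculus)
    fix x :: real
    show "((\<lambda>a. exp (q + a * k) / k) has_vector_derivative exp (q + x * k)) (at x within {0..1})"
      using False
      by (auto intro!: derivative_eq_intros simp: has_real_derivative_iff_has_vector_derivative[symmetric])
  qed simp
  then show ?thesis using False by (simp add: integral_unique diff_divide_distrib)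
qed simp

lemma logmean_eq:
  "logmean s t = (if s = 0 \<or> t = 0 then 0 else if ln s = ln t then exp (ln t)
     else (exp (ln s) - exp (ln t)) / (ln s - ln t))"
proof (cases "s = 0 \<or> t = 0")
  case False
  then have "\<And>a. s powr a * t powr (1 - a) = exp (ln t + a * (ln s - ln t))"
    by (simp add: powr_def exp_add[symmetric] algebra_simps)
  then have "logmean s t = integral {0..1} (\<lambda>a. exp (ln t + a * (ln s - ln t)))"
    by (simp add: logmean_def)
  then show ?thesis using False by (simp add: integral_exp_affine)
qed (auto simp: logmean_def)

lemma borel_measurable_logmean[measurable]:
  assumes [measurable]: "f \<in> borel_measurable M" "g \<in> borel_measurable M"
  shows "(\<lambda>x. logmean (f x) (g x)) \<in> borel_measurable M"
  unfolding logmean_eq by measurable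

lemma logmean_commute: "logmean s t = logmean t s"
proof -
  have "(exp p - exp q) / (p - q) = (exp q - exp p) / (q - p)" for p q :: real
    by (metis minus_diff_eq minus_divide_divide)
  from this[of "ln s" "ln t"] show ?thesis unfolding logmean_eq by auto
qed

lemma logmean_nonneg:
  assumes "0 \<le> s" "0 \<le> t"
  shows "0 \<le> logmean s t"
proof -
  have "0 \<le> (exp p - exp q) / (p - q)" for p q :: real
    by (auto simp: zero_le_divide_iff)
  from this[of "ln s" "ln t"] show ?thesis unfolding logmean_eq by simp
qed

lemma divided_difference_exp_le_max:
  fixes p q :: real
  assumes "p \<noteq> q"
  shows "(exp p - exp q) / (p - q) \<le> max (exp p) (exp q)"
proof -
  have le: "(exp p - exp q) / (p - q) \<le> exp p" if "q < p" for p q :: real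
  proof -
    have "exp p * (1 + (q - p)) \<le> exp p * exp (q - p)" by (simp add: exp_ge_add_one_self)
    also have "\<dots> = exp q" by (simp add: exp_diff)
    finally have "exp p - exp q \<le> (p - q) * exp p" by (simp add: algebra_simps)
    then show ?thesis using that by (simp add: divide_le_eq mult.commute)
  qed
  have "(exp p - exp q) / (p - q) = (exp q - exp p) / (q - p)"
    by (metis minus_diff_eq minus_divide_divide)
  then show ?thesis using le[of q p] le[of p q] assms by (cases "q < p") auto
qed

lemma logmean_le_max:
  assumes "0 \<le> s" "0 \<le> t"
  shows "logmean s t \<le> max s t"
  using divided_difference_exp_le_max[of "ln s" "ln t"] assms unfolding logmean_eq by auto

section \<open>Weighted graphs\<close>

definition sym_weights :: "('x \<Rightarrow> 'x \<Rightarrow> real) \<Rightarrow> bool" where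
  "sym_weights w \<longleftrightarrow> (\<forall>x y. w x y = w y x) \<and> (\<forall>x y. 0 \<le> w x y)"

definition edges :: "('x \<Rightarrow> 'x \<Rightarrow> real) \<Rightarrow> ('x \<times> 'x) set" where
  "edges w = {(x, y). 0 < w x y}"

definition laplacian :: "('x::finite \<Rightarrow> 'x \<Rightarrow> real) \<Rightarrow> ('x \<Rightarrow> real) \<Rightarrow> 'x \<Rightarrow> real" where
  "laplacian w \<psi> x = (\<Sum>y\<in>UNIV. w x y * (\<psi> x - \<psi> y))"

lemma sym_weightsD:
  assumes "sym_weights w"
  shows "w x y = w y x" "0 \<le> w x y"
  using assms by (simp_all add: sym_weights_def)

lemma laplacian_energy:
  assumes "sym_weights w"
  shows "(\<Sum>x\<in>UNIV. \<psi> x * laplacian w \<psi> x) = (1/2) * (\<Sum>x\<in>UNIV. \<Sum>y\<in>UNIV. w x y * (\<psi> x - \<psi> y)\<^sup>2)"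
proof -
  have "(\<Sum>x\<in>UNIV. \<Sum>y\<in>UNIV. w x y * (\<psi> x - \<psi> y)\<^sup>2)
      = (\<Sum>x\<in>UNIV. \<Sum>y\<in>UNIV. w x y * \<psi> x * (\<psi> x - \<psi> y)) + (\<Sum>x\<in>UNIV. \<Sum>y\<in>UNIV. w x y * \<psi> y * (\<psi> y - \<psi> x))"
    by (simp add: sum.distrib[symmetric] power2_eq_square algebra_simps)
  also have "(\<Sum>x\<in>UNIV. \<Sum>y\<in>UNIV. w x y * \<psi> y * (\<psi> y - \<psi> x)) = (\<Sum>x\<in>UNIV. \<Sum>y\<in>UNIV. w x y * \<psi> x * (\<psi> x - \<psi> y))"
    by (subst sum.swap) (simp add: sym_weightsD(1)[OF assms])
  finally show ?thesis by (simp add: laplacian_def sum_distrib_left algebra_simps)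
qed

lemma dvg_weighted_grad:
  assumes "sym_weights w"
  shows "dvg (\<lambda>x y. w x y * grad \<psi> x y) x = - laplacian w \<psi> x"
proof -
  have "dvg (\<lambda>x y. w x y * grad \<psi> x y) x = (1/2) * (\<Sum>y\<in>UNIV. 2 * (w x y * (\<psi> y - \<psi> x)))"
    unfolding dvg_def grad_def
    by (intro arg_cong[where f="\<lambda>s. (1/2) * s"] sum.cong refl)
      (simp add: sym_weightsD(1)[OF assms, of x] algebra_simps)
  also have "\<dots> = - laplacian w \<psi> x"
    by (simp add: laplacian_def sum_distrib_left sum_negf[symmetric] algebra_simps)
  finally show ?thesis .
qed

lemma sum_antisym_eq_0:
  fixes f :: "'x \<Rightarrow> 'x \<Rightarrow> real"
  assumes "\<And>x y. f x y = - f y x"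
  shows "(\<Sum>x\<in>C. \<Sum>y\<in>C. f x y) = 0"
proof -
  have "(\<Sum>x\<in>C. \<Sum>y\<in>C. f x y) = (\<Sum>y\<in>C. \<Sum>x\<in>C. - f y x)"
    by (subst sum.swap) (intro sum.cong refl assms)
  then show ?thesis by (simp add: sum_negf)
qed

lemma sum_dvg_component:
  assumes w: "sym_weights w" and u: "\<And>x y. w x y = 0 \<Longrightarrow> u x y = 0"
  shows "(\<Sum>y\<in>{y. (i, y) \<in> (edges w)\<^sup>*}. dvg u y) = 0"
proof -
  define C where "C = {y. (i, y) \<in> (edges w)\<^sup>*}"
  have "w y z = 0" "w z y = 0" if "y \<in> C" "z \<notin> C" for y z
    using that rtrancl_into_rtrancl[of i y "edges w" z] sym_weightsD[OF w, of y z]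
    by (force simp: C_def edges_def)+
  then have "(\<Sum>y\<in>C. \<Sum>z\<in>UNIV. u y z - u z y) = (\<Sum>y\<in>C. \<Sum>z\<in>C. u y z - u z y)"
    by (intro sum.cong refl sum.mono_neutral_right) (auto simp: u)
  also have "\<dots> = 0" by (rule sum_antisym_eq_0) simp
  finally show ?thesis by (simp add: C_def dvg_def sum_divide_distrib[symmetric])
qed

definition component_rep :: "('x \<times> 'x) set \<Rightarrow> 'x \<Rightarrow> 'x" where
  "component_rep E x = (SOME y. (x, y) \<in> E\<^sup>*)"

definition is_root :: "('x \<Rightarrow> 'x \<Rightarrow> real) \<Rightarrow> 'x \<Rightarrow> bool" where
  "is_root w x \<longleftrightarrow> component_rep (edges w) x = x"

lemma edges_rtrancl_sym:
  assumes "sym_weights w" "(x, y) \<in> (edges w)\<^sup>*"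
  shows "(y, x) \<in> (edges w)\<^sup>*"
proof -
  have "sym (edges w)" using sym_weightsD(1)[OF assms(1)] by (auto simp: sym_def edges_def)
  then show ?thesis using assms(2) sym_rtrancl by (metis symD)
qed

lemma component_rep_in: "(x, component_rep E x) \<in> E\<^sup>*"
  unfolding component_rep_def by (rule someI[of _ x]) simp

lemma component_rep_eq:
  assumes "sym_weights w" "(x, y) \<in> (edges w)\<^sup>*"
  shows "component_rep (edges w) x = component_rep (edges w) y"
proof -
  have "(x, z) \<in> (edges w)\<^sup>* \<longleftrightarrow> (y, z) \<in> (edges w)\<^sup>*" for z
    using assms edges_rtrancl_sym[OF assms(1)] by (blast intro: rtrancl_trans)
  then show ?thesis by (simp add: component_rep_def)
qed

lemma is_root_component_rep: "sym_weights w \<Longrightarrow> is_root w (component_rep (edges w) x)"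
  unfolding is_root_def by (metis component_rep_eq component_rep_in)

lemma constant_on_component:
  assumes "(x, y) \<in> (edges w)\<^sup>*" "\<And>x y. 0 < w x y \<Longrightarrow> \<psi> x = \<psi> y"
  shows "\<psi> x = \<psi> y"
  using assms(1) by induction (auto simp: edges_def dest: assms(2))

section \<open>The graph Poisson equation\<close>

text \<open>The equation \<open>laplacian w \<psi> = -b\<close> with the row of every component root replaced by the
  normalisation \<open>\<psi> root = 0\<close>; this matrix is invertible, so Cramer's rule gives a solution
  depending measurably on \<open>w\<close> and \<open>b\<close>.\<close>

definition poisson_matrix :: "('x::finite \<Rightarrow> 'x \<Rightarrow> real) \<Rightarrow> real^'x^'x" where
  "poisson_matrix w = (\<chi> i j. if is_root w i then (if i = j then 1 else 0)
     else (if i = j then (\<Sum>z\<in>UNIV. w i z) else 0) - w i j)"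

definition poisson_rhs :: "('x::finite \<Rightarrow> 'x \<Rightarrow> real) \<Rightarrow> ('x \<Rightarrow> real) \<Rightarrow> real^'x" where
  "poisson_rhs w b = (\<chi> i. if is_root w i then 0 else - b i)"

definition poisson_sol :: "('x::finite \<Rightarrow> 'x \<Rightarrow> real) \<Rightarrow> ('x \<Rightarrow> real) \<Rightarrow> 'x \<Rightarrow> real" where
  "poisson_sol w b k =
     det (\<chi> i j. if j = k then poisson_rhs w b $ i else poisson_matrix w $ i $ j) / det (poisson_matrix w)"

lemma poisson_matrix_mult:
  "(poisson_matrix w *v (\<chi> i. \<psi> i)) $ i = (if is_root w i then \<psi> i else laplacian w \<psi> i)"
proof -
  have delta: "(\<Sum>j\<in>UNIV. (if i = j then a else 0) * \<psi> j) = a * \<psi> i" for a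
  proof -
    have "(\<Sum>j\<in>UNIV. (if i = j then a else 0) * \<psi> j) = (\<Sum>j\<in>UNIV. if i = j then a * \<psi> j else 0)"
      by (intro sum.cong) auto
    then show ?thesis by simp
  qed
  have "(poisson_matrix w *v (\<chi> i. \<psi> i)) $ i = (\<Sum>j\<in>UNIV. poisson_matrix w $ i $ j * \<psi> j)"
    by (simp add: matrix_vector_mult_def)
  also have "\<dots> = (if is_root w i then \<psi> i
      else (\<Sum>j\<in>UNIV. (if i = j then (\<Sum>z\<in>UNIV. w i z) else 0) * \<psi> j) - (\<Sum>j\<in>UNIV. w i j * \<psi> j))"
    by (simp add: poisson_matrix_def delta sum_subtractf left_diff_distrib)
  also have "\<dots> = (if is_root w i then \<psi> i else laplacian w \<psi> i)"
    by (simp add: delta laplacian_def right_diff_distrib sum_subtractf sum_distrib_right)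
  finally show ?thesis .
qed

lemma poisson_matrix_kernel:
  assumes "sym_weights w" "poisson_matrix w *v u = 0"
  shows "u = 0"
proof -
  define \<psi> where "\<psi> i = u $ i" for i
  have u: "u = (\<chi> i. \<psi> i)" by (simp add: \<psi>_def vec_eq_iff)
  have eq: "(if is_root w i then \<psi> i else laplacian w \<psi> i) = 0" for i
    using assms(2) poisson_matrix_mult[of w \<psi> i] u by simp
  have "(\<Sum>x\<in>UNIV. \<psi> x * laplacian w \<psi> x) = 0"
    by (rule sum.neutral) (metis eq mult_zero_left mult_zero_right)
  then have "(\<Sum>x\<in>UNIV. \<Sum>y\<in>UNIV. w x y * (\<psi> x - \<psi> y)\<^sup>2) = 0"
    using laplacian_energy[OF assms(1)] by simp
  moreover have nonneg: "0 \<le> w x y * (\<psi> x - \<psi> y)\<^sup>2" for x y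
    using sym_weightsD(2)[OF assms(1)] by simp
  ultimately have "w x y * (\<psi> x - \<psi> y)\<^sup>2 = 0" for x y
    by (simp add: sum_nonneg sum_nonneg_eq_0_iff)
  then have "0 < w x y \<Longrightarrow> \<psi> x = \<psi> y" for x y
    by (metis less_irrefl mult_eq_0_iff power_eq_0_iff right_minus_eq)
  then have "\<psi> x = \<psi> (component_rep (edges w) x)" for x
    by (rule constant_on_component[OF component_rep_in])
  then have "\<psi> x = 0" for x
    using eq is_root_component_rep[OF assms(1)] by metis
  then show ?thesis using u by (simp add: vec_eq_iff)
qed

lemma det_poisson_matrix_nonzero: "sym_weights w \<Longrightarrow> det (poisson_matrix w) \<noteq> 0"
  using poisson_matrix_kernel matrix_left_invertible_ker invertible_left_inverse invertible_det_nz
  by metis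

lemma laplacian_poisson_sol_nonroot:
  assumes "sym_weights w" "\<not> is_root w i"
  shows "laplacian w (poisson_sol w b) i = - b i"
proof -
  have "poisson_matrix w *v (\<chi> k. poisson_sol w b k) = poisson_rhs w b"
    using cramer[OF det_poisson_matrix_nonzero[OF assms(1)]] by (simp add: poisson_sol_def)
  then show ?thesis
    using poisson_matrix_mult[of w "poisson_sol w b" i] assms(2) by (simp add: poisson_rhs_def vec_eq_iff)
qed

text \<open>On a component the equations sum to zero, so the one dropped at the root holds as well.\<close>

lemma laplacian_poisson_sol:
  assumes w: "sym_weights w" and b: "\<And>x. (\<Sum>y\<in>{y. (x, y) \<in> (edges w)\<^sup>*}. b y) = 0"
  shows "laplacian w (poisson_sol w b) i = - b i"
proof (cases "is_root w i")
  case True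
  define C where "C = {y. (i, y) \<in> (edges w)\<^sup>*}"
  define \<psi> where "\<psi> = poisson_sol w b"
  have "\<not> is_root w y" if "y \<in> C - {i}" for y
    using that component_rep_eq[OF w, of i y] True by (auto simp: C_def is_root_def)
  then have rest: "(\<Sum>y\<in>C - {i}. laplacian w \<psi> y + b y) = 0"
    by (simp add: laplacian_poisson_sol_nonroot[OF w] \<psi>_def)
  have "(\<Sum>y\<in>C. laplacian w \<psi> y) = 0"
    using sum_dvg_component[OF w, where u="\<lambda>x y. w x y * grad \<psi> x y" and i=i]
    by (simp add: dvg_weighted_grad[OF w] sum_negf C_def)
  then have "0 = (\<Sum>y\<in>C. laplacian w \<psi> y + b y)"
    using b by (simp add: sum.distrib C_def)
  also have "\<dots> = laplacian w \<psi> i + b i"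
    using rest by (subst sum.remove[of C i]) (simp_all add: C_def)
  finally show ?thesis by (simp add: \<psi>_def)
qed (use laplacian_poisson_sol_nonroot[OF w] in simp)

lemma borel_measurable_det[measurable]:
  fixes F :: "'a \<Rightarrow> 'n::finite \<Rightarrow> 'n \<Rightarrow> real"
  assumes [measurable]: "\<And>i j. (\<lambda>t. F t i j) \<in> borel_measurable M"
  shows "(\<lambda>t. det (\<chi> i j. F t i j)) \<in> borel_measurable M"
  unfolding det_def by simp measurable

lemma measurable_edges:
  fixes W :: "'a \<Rightarrow> 'x::finite \<Rightarrow> 'x \<Rightarrow> real"
  assumes [measurable]: "\<And>x y. (\<lambda>t. W t x y) \<in> borel_measurable M"
  shows "(\<lambda>t. edges (W t)) \<in> measurable M (count_space UNIV)"
proof (rule iffD2[OF measurable_count_space_eq2_countable], intro conjI ballI)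
  fix E :: "('x \<times> 'x) set"
  have "(\<lambda>t. edges (W t)) -` {E} \<inter> space M = {t \<in> space M. \<forall>x y. (0 < W t x y) = ((x, y) \<in> E)}"
    by (auto simp: edges_def)
  also have "\<dots> \<in> sets M" by measurable
  finally show "(\<lambda>t. edges (W t)) -` {E} \<inter> space M \<in> sets M" .
qed simp

lemma pred_is_root[measurable]:
  fixes W :: "'a \<Rightarrow> 'x::finite \<Rightarrow> 'x \<Rightarrow> real"
  assumes "\<And>x y. (\<lambda>t. W t x y) \<in> borel_measurable M"
  shows "Measurable.pred M (\<lambda>t. is_root (W t) x)"
proof -
  have "(\<lambda>t. edges (W t)) -` {E. component_rep E x = x} \<inter> space M \<in> sets M"
    by (rule measurable_sets[OF measurable_edges[OF assms]]) simp
  also have "(\<lambda>t. edges (W t)) -` {E. component_rep E x = x} \<inter> space M = {t \<in> space M. is_root (W t) x}"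
    by (auto simp: is_root_def)
  finally show ?thesis unfolding Measurable.pred_def .
qed

lemma borel_measurable_poisson_sol[measurable]:
  fixes W :: "'a \<Rightarrow> 'x::finite \<Rightarrow> 'x \<Rightarrow> real"
  assumes [measurable]: "\<And>x y. (\<lambda>t. W t x y) \<in> borel_measurable M"
    and [measurable]: "\<And>x. (\<lambda>t. B t x) \<in> borel_measurable M"
  shows "(\<lambda>t. poisson_sol (W t) (B t) k) \<in> borel_measurable M"
proof -
  have [measurable]: "(\<lambda>t. poisson_matrix (W t) $ i $ j) \<in> borel_measurable M" for i j
    unfolding poisson_matrix_def vec_lambda_beta by measurable
  have [measurable]: "(\<lambda>t. poisson_rhs (W t) (B t) $ i) \<in> borel_measurable M" for i
    unfolding poisson_rhs_def vec_lambda_beta by measurable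
  have eta: "poisson_matrix (W t) = (\<chi> i j. poisson_matrix (W t) $ i $ j)" for t
    by (simp add: vec_eq_iff)
  have "(\<lambda>t. det (poisson_matrix (W t))) \<in> borel_measurable M"
    by (subst eta) measurable
  then show ?thesis unfolding poisson_sol_def by measurable
qed

section \<open>Gradient fluxes minimise the action\<close>

lemma sum_flux_grad:
  fixes u :: "'x::finite \<Rightarrow> 'x \<Rightarrow> real"
  shows "(\<Sum>x\<in>UNIV. \<Sum>y\<in>UNIV. u x y * (\<psi> y - \<psi> x)) = - 2 * (\<Sum>x\<in>UNIV. \<psi> x * dvg u x)"
proof -
  have "2 * (\<Sum>x\<in>UNIV. \<psi> x * dvg u x)
      = (\<Sum>x\<in>UNIV. \<Sum>y\<in>UNIV. \<psi> x * u x y) - (\<Sum>x\<in>UNIV. \<Sum>y\<in>UNIV. \<psi> x * u y x)"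
    by (simp add: dvg_def sum_distrib_left sum_subtractf right_diff_distrib)
  also have "(\<Sum>x\<in>UNIV. \<Sum>y\<in>UNIV. \<psi> x * u y x) = (\<Sum>x\<in>UNIV. \<Sum>y\<in>UNIV. \<psi> y * u x y)"
    by (rule sum.swap)
  finally show ?thesis by (simp add: sum_subtractf right_diff_distrib mult.commute)
qed

lemma borel_measurable_alpha[measurable]:
  assumes [measurable]: "f \<in> borel_measurable M" "g \<in> borel_measurable M"
  shows "(\<lambda>t. alpha (f t) (g t)) \<in> borel_measurable M"
  unfolding alpha_def by measurable

lemma vec_action_finiteD:
  assumes "\<And>x y. 0 \<le> wgt Q \<mu> x y" "vec_action Q \<mu> v < \<infinity>"
  shows "\<And>x y. wgt Q \<mu> x y = 0 \<Longrightarrow> v x y = 0"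
    and "vec_action Q \<mu> v = ennreal ((1/2) *
           (\<Sum>x\<in>UNIV. \<Sum>y\<in>UNIV. if 0 < wgt Q \<mu> x y then (v x y)\<^sup>2 / wgt Q \<mu> x y else 0))"
proof -
  have "(\<Sum>x\<in>UNIV. \<Sum>y\<in>UNIV. alpha (v x y) (wgt Q \<mu> x y)) < \<infinity>"
    using assms(2) by (auto simp: vec_action_def ennreal_mult_less_top)
  then have fin: "alpha (v x y) (wgt Q \<mu> x y) < \<infinity>" for x y
    by (simp add: top.not_eq_extremum[symmetric])
  have alpha: "alpha (v x y) (wgt Q \<mu> x y) =
      ennreal (if 0 < wgt Q \<mu> x y then (v x y)\<^sup>2 / wgt Q \<mu> x y else 0)"
    and "wgt Q \<mu> x y = 0 \<Longrightarrow> v x y = 0" for x y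
    using fin[of x y] assms(1)[of x y] by (auto simp: alpha_def split: if_splits)
  then show "\<And>x y. wgt Q \<mu> x y = 0 \<Longrightarrow> v x y = 0" by blast
  show "vec_action Q \<mu> v = ennreal ((1/2) *
      (\<Sum>x\<in>UNIV. \<Sum>y\<in>UNIV. if 0 < wgt Q \<mu> x y then (v x y)\<^sup>2 / wgt Q \<mu> x y else 0))"
    by (simp add: vec_action_def alpha sum_nonneg ennreal_mult[symmetric] del: ennreal_half)
qed

text \<open>Completing the square: \<open>v \<nabla>\<psi> \<le> v\<^sup>2/(2w) + w (\<nabla>\<psi>)\<^sup>2/2\<close> edgewise, while summing
  \<open>v \<nabla>\<psi>\<close> over all edges gives twice the Dirichlet energy of \<open>\<psi>\<close>.\<close>

lemma dirichlet_energy_le_kinetic: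
  fixes w v :: "'x::finite \<Rightarrow> 'x \<Rightarrow> real"
  assumes w: "sym_weights w" and v: "\<And>x y. w x y = 0 \<Longrightarrow> v x y = 0"
    and \<psi>: "\<And>x. laplacian w \<psi> x = - dvg v x"
  shows "(\<Sum>x\<in>UNIV. \<Sum>y\<in>UNIV. (\<psi> y - \<psi> x)\<^sup>2 * w x y)
     \<le> (\<Sum>x\<in>UNIV. \<Sum>y\<in>UNIV. if 0 < w x y then (v x y)\<^sup>2 / w x y else 0)"
proof -
  define E where "E = (\<Sum>x\<in>UNIV. \<Sum>y\<in>UNIV. (\<psi> y - \<psi> x)\<^sup>2 * w x y)"
  define K where "K = (\<Sum>x\<in>UNIV. \<Sum>y\<in>UNIV. if 0 < w x y then (v x y)\<^sup>2 / w x y else 0)"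
  have "E = 2 * (\<Sum>x\<in>UNIV. \<psi> x * laplacian w \<psi> x)"
    unfolding laplacian_energy[OF w] E_def by (simp add: power2_commute mult.commute)
  also have "\<dots> = (\<Sum>x\<in>UNIV. \<Sum>y\<in>UNIV. v x y * (\<psi> y - \<psi> x))"
    by (simp add: \<psi> sum_negf sum_flux_grad)
  also have "\<dots> \<le> (\<Sum>x\<in>UNIV. \<Sum>y\<in>UNIV.
      (1/2) * (if 0 < w x y then (v x y)\<^sup>2 / w x y else 0) + (1/2) * ((\<psi> y - \<psi> x)\<^sup>2 * w x y))"
  proof (intro sum_mono)
    fix x y
    show "v x y * (\<psi> y - \<psi> x) \<le>
      (1/2) * (if 0 < w x y then (v x y)\<^sup>2 / w x y else 0) + (1/2) * ((\<psi> y - \<psi> x)\<^sup>2 * w x y)"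
    proof (cases "0 < w x y")
      case True
      have "0 \<le> (v x y - w x y * (\<psi> y - \<psi> x))\<^sup>2 / w x y" using True by simp
      also have "\<dots> = (v x y)\<^sup>2 / w x y - 2 * v x y * (\<psi> y - \<psi> x) + (\<psi> y - \<psi> x)\<^sup>2 * w x y"
        using True by (simp add: field_simps power2_eq_square)
      finally show ?thesis using True by simp
    qed (use v sym_weightsD(2)[OF w, of x y] in simp)
  qed
  also have "\<dots> = (1/2) * K + (1/2) * E"
    by (simp add: K_def E_def sum.distrib sum_distrib_left)
  finally show ?thesis by (simp add: E_def K_def)
qed

lemma gradient_flux_optimal:
  assumes w: "sym_weights (wgt Q \<mu>)" and fin: "vec_action Q \<mu> v < \<infinity>"
  defines "\<psi> \<equiv> poisson_sol (wgt Q \<mu>) (dvg v)"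
  shows "dvg (\<lambda>x y. wgt Q \<mu> x y * grad \<psi> x y) = dvg v"
    and "ennreal (action Q \<mu> \<psi>) \<le> vec_action Q \<mu> v"
proof -
  note v = vec_action_finiteD[OF sym_weightsD(2)[OF w] fin]
  have \<psi>: "laplacian (wgt Q \<mu>) \<psi> x = - dvg v x" for x
    unfolding \<psi>_def by (intro laplacian_poisson_sol w sum_dvg_component v(1))
  then show "dvg (\<lambda>x y. wgt Q \<mu> x y * grad \<psi> x y) = dvg v"
    by (simp add: dvg_weighted_grad[OF w] fun_eq_iff)
  show "ennreal (action Q \<mu> \<psi>) \<le> vec_action Q \<mu> v"
    unfolding action_def v(2)
    by (intro ennreal_leI mult_left_mono dirichlet_energy_le_kinetic[OF w v(1) \<psi>]) simp_all
qed

section \<open>Bounds on the rates\<close>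

lemma standing_assmsD:
  assumes "standing_assms Q \<pi>"
  shows "\<And>\<mu> x y. prob_meas \<mu> \<Longrightarrow> x \<noteq> y \<Longrightarrow> 0 \<le> Q \<mu> x y"
    and "\<exists>L. \<forall>\<mu> \<mu>' x y. prob_meas \<mu> \<longrightarrow> prob_meas \<mu>' \<longrightarrow>
           \<bar>Q \<mu> x y - Q \<mu>' x y\<bar> \<le> L * (\<Sum>z\<in>UNIV. \<bar>\<mu> z - \<mu>' z\<bar>)"
  using assms unfolding standing_assms_def by simp_all

lemma prob_meas_bounds:
  assumes "prob_meas \<mu>"
  shows "0 \<le> \<mu> x" "\<mu> x \<le> 1"
proof -
  have "\<mu> x \<le> (\<Sum>z\<in>UNIV. \<mu> z)"
    using assms unfolding prob_meas_def by (intro member_le_sum) auto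
  then show "0 \<le> \<mu> x" "\<mu> x \<le> 1" using assms unfolding prob_meas_def by auto
qed

lemma continuous_on_rates:
  fixes Q :: "('x::finite \<Rightarrow> real) \<Rightarrow> 'x \<Rightarrow> 'x \<Rightarrow> real" and f :: "'a::topological_space \<Rightarrow> 'x \<Rightarrow> real"
  assumes Q: "\<forall>\<mu> \<mu>' x y. prob_meas \<mu> \<longrightarrow> prob_meas \<mu>' \<longrightarrow>
      \<bar>Q \<mu> x y - Q \<mu>' x y\<bar> \<le> L * (\<Sum>z\<in>UNIV. \<bar>\<mu> z - \<mu>' z\<bar>)"
    and f: "\<And>t. prob_meas (f t)" "\<And>z. continuous_on UNIV (\<lambda>t. f t z)"
  shows "continuous_on UNIV (\<lambda>t. Q (f t) x y)"
  unfolding continuous_on_def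
proof (intro ballI)
  fix t0
  have "((\<lambda>t. f t z) \<longlongrightarrow> f t0 z) (at t0)" for z
    using f(2)[of z] unfolding continuous_on_def by auto
  then have "((\<lambda>t. L * (\<Sum>z\<in>UNIV. \<bar>f t z - f t0 z\<bar>)) \<longlongrightarrow> L * (\<Sum>z\<in>UNIV. \<bar>f t0 z - f t0 z\<bar>)) (at t0)"
    by (intro tendsto_intros)
  then have "((\<lambda>t. L * (\<Sum>z\<in>UNIV. \<bar>f t z - f t0 z\<bar>)) \<longlongrightarrow> 0) (at t0)" by simp
  then have "((\<lambda>t. Q (f t) x y - Q (f t0) x y) \<longlongrightarrow> 0) (at t0)"
    by (rule Lim_null_comparison[rotated]) (use Q f(1) in \<open>auto intro!: always_eventually\<close>)
  then show "((\<lambda>t. Q (f t) x y) \<longlongrightarrow> Q (f t0) x y) (at t0 within UNIV)"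
    by (simp add: LIM_zero_cancel)
qed

lemma rates_bounded:
  fixes Q :: "('x::finite \<Rightarrow> real) \<Rightarrow> 'x \<Rightarrow> 'x \<Rightarrow> real" and \<mu>0 :: "'x \<Rightarrow> real"
  assumes Q: "\<forall>\<mu> \<mu>' x y. prob_meas \<mu> \<longrightarrow> prob_meas \<mu>' \<longrightarrow>
      \<bar>Q \<mu> x y - Q \<mu>' x y\<bar> \<le> L * (\<Sum>z\<in>UNIV. \<bar>\<mu> z - \<mu>' z\<bar>)"
    and \<mu>0: "prob_meas \<mu>0"
  shows "\<exists>K. \<forall>\<mu> x y. prob_meas \<mu> \<longrightarrow> \<bar>Q \<mu> x y\<bar> \<le> K"
proof (intro exI allI impI)
  fix \<mu> :: "'x \<Rightarrow> real" and x y
  assume \<mu>: "prob_meas \<mu>"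
  define S where "S = (\<Sum>z\<in>UNIV. \<bar>\<mu> z - \<mu>0 z\<bar>)"
  have "S \<le> (\<Sum>z\<in>UNIV. \<mu> z + \<mu>0 z)"
    unfolding S_def using prob_meas_bounds(1)[OF \<mu>] prob_meas_bounds(1)[OF \<mu>0]
    by (intro sum_mono) (simp add: abs_le_iff)
  also have "\<dots> = 2" using \<mu> \<mu>0 by (simp add: prob_meas_def sum.distrib)
  finally have "L * S \<le> 2 * \<bar>L\<bar>"
    using mult_mono[of "\<bar>L\<bar>" "\<bar>L\<bar>" S 2] abs_ge_self[of L] mult_right_mono[of L "\<bar>L\<bar>" S]
    by (simp add: S_def sum_nonneg mult.commute)
  then have "\<bar>Q \<mu> x y - Q \<mu>0 x y\<bar> \<le> 2 * \<bar>L\<bar>"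
    using Q \<mu> \<mu>0 unfolding S_def by (meson order_trans)
  moreover have "\<bar>Q \<mu>0 x y\<bar> \<le> (\<Sum>x\<in>UNIV. \<Sum>y\<in>UNIV. \<bar>Q \<mu>0 x y\<bar>)"
    using member_le_sum[of y UNIV "\<lambda>y. \<bar>Q \<mu>0 x y\<bar>"]
      member_le_sum[of x UNIV "\<lambda>x. \<Sum>y\<in>UNIV. \<bar>Q \<mu>0 x y\<bar>"] by (simp add: sum_nonneg)
  ultimately show "\<bar>Q \<mu> x y\<bar> \<le> (\<Sum>x\<in>UNIV. \<Sum>y\<in>UNIV. \<bar>Q \<mu>0 x y\<bar>) + 2 * \<bar>L\<bar>"
    by linarith
qed

lemma sym_weights_wgt:
  assumes "prob_meas \<mu>" "\<And>x y. x \<noteq> y \<Longrightarrow> 0 \<le> Q \<mu> x y"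
  shows "sym_weights (wgt Q \<mu>)"
  using prob_meas_bounds(1)[OF assms(1)] assms(2)
  by (auto simp: sym_weights_def wgt_def logmean_commute intro!: logmean_nonneg)

lemma wgt_le:
  assumes "prob_meas \<mu>" "0 \<le> K" "\<And>x y. x \<noteq> y \<Longrightarrow> 0 \<le> Q \<mu> x y \<and> Q \<mu> x y \<le> K"
  shows "wgt Q \<mu> x y \<le> K"
proof -
  have flow: "0 \<le> \<mu> x * Q \<mu> x y \<and> \<mu> x * Q \<mu> x y \<le> K" if "x \<noteq> y" for x y
    using prob_meas_bounds[OF assms(1), of x] assms(3)[OF that]
      mult_mono[of "\<mu> x" 1 "Q \<mu> x y" K] by simp
  show ?thesis
  proof (cases "x = y")
    case False
    then show ?thesis
      using flow[of x y] flow[of y x] logmean_le_max[of "\<mu> x * Q \<mu> x y" "\<mu> y * Q \<mu> y x"]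
      by (simp add: wgt_def) (metis max.bounded_iff order_trans)
  qed (simp add: wgt_def assms(2))
qed

lemma abs_flux_le_action:
  assumes w: "sym_weights (wgt Q \<mu>)" and K: "\<And>x y. wgt Q \<mu> x y \<le> K"
  shows "\<bar>wgt Q \<mu> x y * grad \<psi> x y\<bar> \<le> K + 2 * action Q \<mu> \<psi>"
proof -
  define g where "g = grad \<psi> x y"
  have terms_nonneg: "0 \<le> (\<psi> y' - \<psi> x')\<^sup>2 * wgt Q \<mu> x' y'" for x' y'
    using sym_weightsD(2)[OF w] by simp
  have "wgt Q \<mu> x y * g\<^sup>2 \<le> (\<Sum>y'\<in>UNIV. (\<psi> y' - \<psi> x)\<^sup>2 * wgt Q \<mu> x y')"
    using member_le_sum[of y UNIV "\<lambda>y'. (\<psi> y' - \<psi> x)\<^sup>2 * wgt Q \<mu> x y'"] terms_nonneg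
    by (simp add: g_def grad_def mult.commute)
  also have "\<dots> \<le> 2 * action Q \<mu> \<psi>"
    unfolding action_def
    by (simp, rule member_le_sum[where f="\<lambda>x. \<Sum>y'\<in>UNIV. (\<psi> y' - \<psi> x)\<^sup>2 * wgt Q \<mu> x y'"])
      (auto intro: sum_nonneg terms_nonneg)
  finally have "wgt Q \<mu> x y * (1 + g\<^sup>2) \<le> K + 2 * action Q \<mu> \<psi>"
    using K[of x y] by (simp add: algebra_simps)
  moreover have "\<bar>g\<bar> \<le> 1 + g\<^sup>2"
    using zero_le_power2[of "\<bar>g\<bar> - 1"] by (simp add: power2_diff)
  ultimately show ?thesis
    using sym_weightsD(2)[OF w, of x y] mult_left_mono[of "\<bar>g\<bar>" "1 + g\<^sup>2" "wgt Q \<mu> x y"]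
    by (simp add: g_def abs_mult)
qed

lemma wgt_bounded:
  fixes Q :: "('x::finite \<Rightarrow> real) \<Rightarrow> 'x \<Rightarrow> 'x \<Rightarrow> real" and \<mu>0 :: "'x \<Rightarrow> real"
  assumes Q_nonneg: "\<And>\<mu> x y. prob_meas \<mu> \<Longrightarrow> x \<noteq> y \<Longrightarrow> 0 \<le> Q \<mu> x y"
    and Q_lip: "\<forall>\<mu> \<mu>' x y. prob_meas \<mu> \<longrightarrow> prob_meas \<mu>' \<longrightarrow>
      \<bar>Q \<mu> x y - Q \<mu>' x y\<bar> \<le> L * (\<Sum>z\<in>UNIV. \<bar>\<mu> z - \<mu>' z\<bar>)"
    and "prob_meas \<mu>0"
  obtains K where "\<And>\<mu> x y. prob_meas \<mu> \<Longrightarrow> wgt Q \<mu> x y \<le> K"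
proof -
  obtain K where K: "\<And>\<mu> x y. prob_meas \<mu> \<Longrightarrow> \<bar>Q \<mu> x y\<bar> \<le> K"
    using rates_bounded[OF Q_lip assms(3)] by blast
  have "wgt Q \<mu> x y \<le> K" if "prob_meas \<mu>" for \<mu> x y
    using K[OF that] Q_nonneg[OF that] abs_ge_zero[THEN order_trans, OF K[OF that]]
    by (intro wgt_le that) (auto simp: abs_le_iff)
  then show ?thesis by (rule that)
qed

section \<open>The continuity equation\<close>

lemma set_integrable_if_abs_le:
  fixes F A :: "'a \<Rightarrow> real"
  assumes S: "S \<in> sets M" "emeasure M S < \<infinity>"
    and F: "set_borel_measurable M S F" and A: "A \<in> borel_measurable M"
    and A_nonneg: "\<And>t. t \<in> S \<Longrightarrow> 0 \<le> A t"
    and A_finite: "(\<integral>\<^sup>+ t\<in>S. ennreal (A t) \<partial>M) < \<infinity>"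
    and bound: "\<And>t. t \<in> S \<Longrightarrow> \<bar>F t\<bar> \<le> C + A t"
  shows "set_integrable M S F"
proof (rule set_integrable_bound[OF _ F])
  note [measurable] = S(1) A
  have "integrable M (\<lambda>t. indicator S t * A t)"
  proof (rule integrableI_nonneg)
    have "(\<integral>\<^sup>+ t. ennreal (indicator S t * A t) \<partial>M) = (\<integral>\<^sup>+ t\<in>S. ennreal (A t) \<partial>M)"
      by (intro nn_integral_cong) (simp add: indicator_def)
    then show "(\<integral>\<^sup>+ t. ennreal (indicator S t * A t) \<partial>M) < \<infinity>" using A_finite by simp
    show "AE t in M. 0 \<le> indicator S t * A t" using A_nonneg by (simp add: indicator_def)
  qed measurable
  moreover have "integrable M (\<lambda>t. indicator S t * C)"
    using S by (intro integrable_mult_left) simp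
  ultimately show "set_integrable M S (\<lambda>t. C + A t)"
    unfolding set_integrable_def by (simp add: distrib_left integrable_add)
  show "AE t in M. t \<in> S \<longrightarrow> norm (F t) \<le> norm (C + A t)"
    using bound by force
qed

lemma AE_less_top_if_set_nn_integral_finite:
  assumes "S \<in> sets M" "f \<in> borel_measurable M" "(\<integral>\<^sup>+ t\<in>S. f t \<partial>M) < \<infinity>"
  shows "AE t in M. t \<in> S \<longrightarrow> f t < \<infinity>"
  using nn_integral_PInf_AE[of "\<lambda>t. f t * indicator S t" M] assms
  by (auto simp: top.not_eq_extremum[symmetric] elim!: eventually_mono)

lemma vecCE_cong:
  assumes "0 \<le> T" "\<And>t. t \<in> {0..T} \<Longrightarrow> c t = c' t" "\<And>t. t \<in> {0..T} \<Longrightarrow> v t = v' t"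
  shows "vecCE T \<mu> \<nu> c v \<longleftrightarrow> vecCE T \<mu> \<nu> c' v'"
proof -
  have "continuous_on {0..T} (\<lambda>t. c t x) \<longleftrightarrow> continuous_on {0..T} (\<lambda>t. c' t x)" for x
    using assms(2) by (intro continuous_on_cong) auto
  moreover have "set_integrable lborel {0..T} (\<lambda>t. v t x y) \<longleftrightarrow> set_integrable lborel {0..T} (\<lambda>t. v' t x y)"
    for x y using assms(3) by (intro set_integrable_cong) auto
  moreover have "(LINT t:{0..T}|lborel. \<phi>' t * c t x - \<phi> t * dvg (v t) x)
      = (LINT t:{0..T}|lborel. \<phi>' t * c' t x - \<phi> t * dvg (v' t) x)" for \<phi> \<phi>' :: "real \<Rightarrow> real" and x
    using assms(2,3) by (intro set_lebesgue_integral_cong) auto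
  ultimately show ?thesis
    using assms by (simp add: vecCE_def)
qed

lemma vecCE_dvg_cong_AE:
  assumes ce: "vecCE T \<mu> \<nu> c v"
    and [measurable]: "\<And>x. (\<lambda>t. c t x) \<in> borel_measurable lborel"
      "\<And>x y. (\<lambda>t. v t x y) \<in> borel_measurable lborel" "\<And>x y. (\<lambda>t. v' t x y) \<in> borel_measurable lborel"
    and v': "\<And>x y. set_integrable lborel {0..T} (\<lambda>t. v' t x y)"
    and dvg: "AE t\<in>{0..T} in lborel. dvg (v' t) = dvg (v t)"
  shows "vecCE T \<mu> \<nu> c v'"
proof -
  have "(LINT t:{0..T}|lborel. \<phi>' t * c t x - \<phi> t * dvg (v' t) x) = 0" if \<phi>: "C1c T \<phi> \<phi>'" for \<phi> \<phi>' x
  proof -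
    have "continuous_on UNIV \<phi>'" "continuous_on UNIV \<phi>"
      using \<phi> by (auto simp: C1c_def intro!: continuous_at_imp_continuous_on DERIV_isCont)
    then have [measurable]: "\<phi>' \<in> borel_measurable lborel" "\<phi> \<in> borel_measurable lborel"
      by (simp_all add: borel_measurable_continuous_onI)
    have [measurable]: "(\<lambda>t. dvg (v t) x) \<in> borel_measurable lborel" "(\<lambda>t. dvg (v' t) x) \<in> borel_measurable lborel"
      unfolding dvg_def by measurable
    have "AE t\<in>{0..T} in lborel. \<phi>' t * c t x - \<phi> t * dvg (v' t) x = \<phi>' t * c t x - \<phi> t * dvg (v t) x"
      using dvg by (auto elim!: eventually_mono)
    then have "(LINT t:{0..T}|lborel. \<phi>' t * c t x - \<phi> t * dvg (v' t) x)
        = (LINT t:{0..T}|lborel. \<phi>' t * c t x - \<phi> t * dvg (v t) x)"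
      by (intro set_lebesgue_integral_cong_AE) measurable
    also have "\<dots> = 0" using ce \<phi> by (simp add: vecCE_def)
    finally show ?thesis .
  qed
  then show ?thesis using ce v' by (simp add: vecCE_def)
qed

lemma set_integrable_gradient_flux:
  fixes c :: "real \<Rightarrow> 'x::finite \<Rightarrow> real"
  assumes w: "\<And>t. sym_weights (wgt Q (c t))" and K: "\<And>t x y. wgt Q (c t) x y \<le> K"
    and [measurable]: "\<And>x y. (\<lambda>t. wgt Q (c t) x y) \<in> borel_measurable lborel"
      "\<And>x. (\<lambda>t. \<psi> t x) \<in> borel_measurable lborel"
    and fin: "(\<integral>\<^sup>+ t\<in>{0..T}. ennreal (action Q (c t) (\<psi> t)) \<partial>lborel) < \<infinity>"
  shows "set_integrable lborel {0..T} (\<lambda>t. wgt Q (c t) x y * grad (\<psi> t) x y)"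
proof (rule set_integrable_if_abs_le[where A="\<lambda>t. 2 * action Q (c t) (\<psi> t)"])
  have [measurable]: "(\<lambda>t. action Q (c t) (\<psi> t)) \<in> borel_measurable lborel"
    unfolding action_def by measurable
  have nonneg: "0 \<le> action Q (c t) (\<psi> t)" for t
    using sym_weightsD(2)[OF w] by (simp add: action_def sum_nonneg)
  then show "0 \<le> 2 * action Q (c t) (\<psi> t)" for t by simp
  have "(\<integral>\<^sup>+ t\<in>{0..T}. ennreal (2 * action Q (c t) (\<psi> t)) \<partial>lborel)
      = (\<integral>\<^sup>+ t. 2 * (ennreal (action Q (c t) (\<psi> t)) * indicator {0..T} t) \<partial>lborel)"
    by (intro nn_integral_cong) (simp add: nonneg ennreal_mult mult.assoc)
  also have "\<dots> = 2 * (\<integral>\<^sup>+ t\<in>{0..T}. ennreal (action Q (c t) (\<psi> t)) \<partial>lborel)"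
    by (rule nn_integral_cmult) measurable
  finally show "(\<integral>\<^sup>+ t\<in>{0..T}. ennreal (2 * action Q (c t) (\<psi> t)) \<partial>lborel) < \<infinity>"
    using fin by (simp add: ennreal_mult_less_top)
  show "\<bar>wgt Q (c t) x y * grad (\<psi> t) x y\<bar> \<le> K + 2 * action Q (c t) (\<psi> t)" for t
    by (rule abs_flux_le_action[OF w K])
qed (auto simp: set_borel_measurable_def action_def grad_def emeasure_lborel_Icc_eq)

lemma exists_gradient_flux:
  fixes Q :: "('x::finite \<Rightarrow> real) \<Rightarrow> 'x \<Rightarrow> 'x \<Rightarrow> real"
  assumes Q_nonneg: "\<And>\<mu> x y. prob_meas \<mu> \<Longrightarrow> x \<noteq> y \<Longrightarrow> 0 \<le> Q \<mu> x y"
    and Q_lip: "\<forall>\<mu> \<mu>' x y. prob_meas \<mu> \<longrightarrow> prob_meas \<mu>' \<longrightarrow>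
      \<bar>Q \<mu> x y - Q \<mu>' x y\<bar> \<le> L * (\<Sum>z\<in>UNIV. \<bar>\<mu> z - \<mu>' z\<bar>)"
    and c: "\<And>t. prob_meas (c t)" "\<And>x. continuous_on UNIV (\<lambda>t. c t x)"
    and v [measurable]: "\<And>x y. (\<lambda>t. v t x y) \<in> borel_measurable lborel"
    and ce: "vecCE T \<mu> \<nu> c v"
    and fin: "(\<integral>\<^sup>+ t\<in>{0..T}. vec_action Q (c t) (v t) \<partial>lborel) < \<infinity>"
  shows "\<exists>\<psi> :: real \<Rightarrow> 'x \<Rightarrow> real.
           (\<forall>x. (\<lambda>t. \<psi> t x) \<in> borel_measurable lborel) \<and>
           CE Q T \<mu> \<nu> c \<psi> \<and>
           (\<integral>\<^sup>+ t\<in>{0..T}. ennreal (action Q (c t) (\<psi> t)) \<partial>lborel)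
             \<le> (\<integral>\<^sup>+ t\<in>{0..T}. vec_action Q (c t) (v t) \<partial>lborel)"
proof (intro exI conjI allI)
  define \<psi> where "\<psi> t = poisson_sol (wgt Q (c t)) (dvg (v t))" for t
  have [measurable]: "(\<lambda>t. c t x) \<in> borel_measurable lborel" for x
    using c(2) by (simp add: borel_measurable_continuous_onI)
  have [measurable]: "(\<lambda>t. Q (c t) x y) \<in> borel_measurable lborel" for x y
    using continuous_on_rates[OF Q_lip c] by (simp add: borel_measurable_continuous_onI)
  have W [measurable]: "(\<lambda>t. wgt Q (c t) x y) \<in> borel_measurable lborel" for x y
    unfolding wgt_def by measurable
  show \<psi> [measurable]: "(\<lambda>t. \<psi> t x) \<in> borel_measurable lborel" for x
    unfolding \<psi>_def dvg_def by measurable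
  have w: "sym_weights (wgt Q (c t))" for t by (intro sym_weights_wgt c Q_nonneg)
  have optimal: "dvg (\<lambda>x y. wgt Q (c t) x y * grad (\<psi> t) x y) = dvg (v t)"
      "ennreal (action Q (c t) (\<psi> t)) \<le> vec_action Q (c t) (v t)"
    if "vec_action Q (c t) (v t) < \<infinity>" for t
    using gradient_flux_optimal[OF w that] by (simp_all add: \<psi>_def)
  have "ennreal (action Q (c t) (\<psi> t)) \<le> vec_action Q (c t) (v t)" for t
    using optimal(2)[of t] by (cases "vec_action Q (c t) (v t) < \<infinity>") (auto simp: top.not_eq_extremum[symmetric])
  then show ineq: "(\<integral>\<^sup>+ t\<in>{0..T}. ennreal (action Q (c t) (\<psi> t)) \<partial>lborel)
      \<le> (\<integral>\<^sup>+ t\<in>{0..T}. vec_action Q (c t) (v t) \<partial>lborel)"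
    by (intro nn_integral_mono mult_right_mono) simp_all
  obtain K where "\<And>t x y. wgt Q (c t) x y \<le> K"
    using wgt_bounded[OF Q_nonneg Q_lip c(1)] c(1) by metis
  then have flux_integrable:
    "set_integrable lborel {0..T} (\<lambda>t. wgt Q (c t) x y * grad (\<psi> t) x y)" for x y
    using fin ineq by (intro set_integrable_gradient_flux[OF w]) auto
  have "(\<lambda>t. vec_action Q (c t) (v t)) \<in> borel_measurable lborel"
    unfolding vec_action_def by measurable
  then have "AE t\<in>{0..T} in lborel. vec_action Q (c t) (v t) < \<infinity>"
    by (intro AE_less_top_if_set_nn_integral_finite[OF _ _ fin]) simp_all
  then have "AE t\<in>{0..T} in lborel. dvg (\<lambda>x y. wgt Q (c t) x y * grad (\<psi> t) x y) = dvg (v t)"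
    by (rule eventually_mono) (simp add: optimal(1))
  then show "CE Q T \<mu> \<nu> c \<psi>"
    unfolding CE_def using flux_integrable by (intro vecCE_dvg_cong_AE[OF ce]) (auto simp: grad_def)
qed

lemma vecCE_extension:
  assumes "0 \<le> T" "vecCE T \<mu> \<nu> c v"
  obtains c' v' where "\<And>t. prob_meas (c' t)" "\<And>x. continuous_on UNIV (\<lambda>t. c' t x)"
    "\<And>x y. (\<lambda>t. v' t x y) \<in> borel_measurable lborel"
    "\<And>t. t \<in> {0..T} \<Longrightarrow> c' t = c t" "\<And>t. t \<in> {0..T} \<Longrightarrow> v' t = v t"
proof
  define clamp where "clamp t = max 0 (min T t)" for t
  have clamp: "clamp t \<in> {0..T}" "continuous_on UNIV clamp" for t
    unfolding clamp_def using assms(1) by (simp, intro continuous_intros)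
  show "prob_meas (c (clamp t))" for t
    using assms(2) clamp(1) by (simp add: vecCE_def)
  show "continuous_on UNIV (\<lambda>t. c (clamp t) x)" for x
    using clamp assms(2) by (intro continuous_on_compose2[OF _ clamp(2)]) (auto simp: vecCE_def)
  show "(\<lambda>t. indicator {0..T} t * v t x y) \<in> borel_measurable lborel" for x y
    using assms(2) by (intro borel_measurable_integrable) (simp add: vecCE_def set_integrable_def)
  show "c (clamp t) = c t" "(\<lambda>x y. indicator {0..T} t * v t x y) = v t" if "t \<in> {0..T}" for t
    using that by (auto simp: clamp_def)
qed

theorem proposition2p7:
  fixes Q :: "('x::finite \<Rightarrow> real) \<Rightarrow> 'x \<Rightarrow> 'x \<Rightarrow> real"
    and \<pi> :: "('x \<Rightarrow> real) \<Rightarrow> 'x \<Rightarrow> real"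
    and T :: real and \<mu> \<nu> :: "'x \<Rightarrow> real"
    and c :: "real \<Rightarrow> 'x \<Rightarrow> real" and v :: "real \<Rightarrow> 'x \<Rightarrow> 'x \<Rightarrow> real"
  assumes "standing_assms Q \<pi>"
    and "T > 0" and "prob_meas \<mu>" and "prob_meas \<nu>"
    and "vecCE T \<mu> \<nu> c v"
    and "(\<integral>\<^sup>+ t\<in>{0..T}. vec_action Q (c t) (v t) \<partial>lborel) < \<infinity>"
  shows "\<exists>\<psi> :: real \<Rightarrow> 'x \<Rightarrow> real.
           (\<forall>x. (\<lambda>t. \<psi> t x) \<in> borel_measurable lborel) \<and>
           CE Q T \<mu> \<nu> c \<psi> \<and>
           (\<integral>\<^sup>+ t\<in>{0..T}. ennreal (action Q (c t) (\<psi> t)) \<partial>lborel)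
             \<le> (\<integral>\<^sup>+ t\<in>{0..T}. vec_action Q (c t) (v t) \<partial>lborel)"
proof -
  obtain L where Q_lip: "\<forall>\<mu> \<mu>' x y. prob_meas \<mu> \<longrightarrow> prob_meas \<mu>' \<longrightarrow>
      \<bar>Q \<mu> x y - Q \<mu>' x y\<bar> \<le> L * (\<Sum>z\<in>UNIV. \<bar>\<mu> z - \<mu>' z\<bar>)"
    using standing_assmsD(2)[OF assms(1)] by blast
  note Q_nonneg = standing_assmsD(1)[OF assms(1)]
  obtain c' v' where c': "\<And>t. prob_meas (c' t)" "\<And>x. continuous_on UNIV (\<lambda>t. c' t x)"
    and v': "\<And>x y. (\<lambda>t. v' t x y) \<in> borel_measurable lborel"
    and on_T: "\<And>t. t \<in> {0..T} \<Longrightarrow> c' t = c t" "\<And>t. t \<in> {0..T} \<Longrightarrow> v' t = v t"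
    using vecCE_extension[OF _ assms(5)] assms(2) by (metis less_imp_le)
  have same_CE: "vecCE T \<mu> \<nu> c' w \<longleftrightarrow> vecCE T \<mu> \<nu> c w'"
    if "\<And>t. t \<in> {0..T} \<Longrightarrow> w t = w' t" for w w'
    using assms(2) on_T that by (intro vecCE_cong) auto
  have same_integral: "(\<integral>\<^sup>+ t\<in>{0..T}. f (c' t) (v' t) t \<partial>lborel)
      = (\<integral>\<^sup>+ t\<in>{0..T}. f (c t) (v t) t \<partial>lborel)" for f
    by (intro set_nn_integral_cong) (simp_all add: on_T)
  have "vecCE T \<mu> \<nu> c' v'"
    using assms(5) same_CE[of v' v, OF on_T(2)] by blast
  moreover have "(\<integral>\<^sup>+ t\<in>{0..T}. vec_action Q (c' t) (v' t) \<partial>lborel) < \<infinity>"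
    using assms(6) same_integral[of "\<lambda>m w t. vec_action Q m w"] by simp
  ultimately obtain \<psi> where "\<forall>x. (\<lambda>t. \<psi> t x) \<in> borel_measurable lborel" "CE Q T \<mu> \<nu> c' \<psi>"
    "(\<integral>\<^sup>+ t\<in>{0..T}. ennreal (action Q (c' t) (\<psi> t)) \<partial>lborel)
      \<le> (\<integral>\<^sup>+ t\<in>{0..T}. vec_action Q (c' t) (v' t) \<partial>lborel)"
    using exists_gradient_flux[OF Q_nonneg Q_lip, of c' v'] c' v' by blast
  moreover have "CE Q T \<mu> \<nu> c' \<psi> \<longleftrightarrow> CE Q T \<mu> \<nu> c \<psi>"
    unfolding CE_def by (intro same_CE) (simp add: on_T)
  ultimately show ?thesis
    using same_integral[of "\<lambda>m w t. ennreal (action Q m (\<psi> t))"]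
      same_integral[of "\<lambda>m w t. vec_action Q m w"] by auto
qed

end
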